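(* For every $\varphi\in\mathcal{L}_{CoRGAL}$, if $\varphi$ is valid then $\varphi\in\mathbf{CoRGAL}$.
   Context: Fix a finite set $A$ of agents and a countable set $P$ of propositional variables. The language $\mathcal{L}_{CoRGAL}$ is given by $\varphi ::= p \mid \neg\varphi \mid (\varphi\wedge\varphi) \mid K_a\varphi \mid [\varphi]\varphi \mid [G,\varphi]\varphi \mid [\langle G\rangle]\varphi$ with $p\in P$, $a\in A$, $G\subseteq A$. $\mathcal{L}_{EL}$ is the fragment built only from $p,\neg,\wedge,K_a$. Duals: $\langle\psi\rangle\varphi:=\neg[\psi]\neg\varphi$, $\langle G,\psi\rangle\varphi:=\neg[G,\psi]\neg\varphi$. $\mathcal{L}^G_{EL}$ is the set of formulas $\bigwedge_{i\in G}K_i\varphi_i$ with $\varphi_i\in\mathcal{L}_{EL}$; $\psi_G,\chi_G$ range over it. Semantics over epistemic models $M=(W,\sim,V)$ ($W\ne\emptyset$, $\sim_a$ equivalence relations, $V:P\to\mathcal{P}(W)$; $M^\varphi$ the restriction to $\{v:(M,v)\models\varphi\}$): standard for $p,\neg,\wedge,K_a$; $[\varphi]\psi$ holds at $w$ iff $(M,w)\models\varphi$ implies $(M^\varphi,w)\models\psi$; $[G,\chi]\varphi$ holds iff $\chi$ holds and $[\psi_G\wedge\chi]\varphi$ holds for all $\psi_G$; $[\langle G\rangle]\varphi$ holds iff for every $\psi_G$ there is $\chi_{A\setminus G}$ with $\psi_G\to\langle\psi_G\wedge\chi_{A\setminus G}\rangle\varphi$ holding. Valid means true at every pointed model. Necessity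 forms: $\eta ::= \sharp \mid \varphi\to\eta(\sharp)\mid K_a\eta(\sharp)\mid[\varphi]\eta(\sharp)$, $\eta(\varphi)$ replaces the unique $\sharp$ by $\varphi$. $\mathbf{CoRGAL}$ is the smallest set containing all instances of (A0) propositional tautologies; (A1) $K_a(\varphi\to\psi)\to(K_a\varphi\to K_a\psi)$; (A2) $K_a\varphi\to\varphi$; (A3) $K_a\varphi\to K_aK_a\varphi$; (A4) $\neg K_a\varphi\to K_a\neg K_a\varphi$; (A5) $[\varphi]p\leftrightarrow(\varphi\to p)$; (A6) $[\varphi]\neg\psi\leftrightarrow(\varphi\to\neg[\varphi]\psi)$; (A7) $[\varphi](\psi\wedge\chi)\leftrightarrow([\varphi]\psi\wedge[\varphi]\chi)$; (A8) $[\varphi]K_a\psi\leftrightarrow(\varphi\to K_a[\varphi]\psi)$; (A9) $[\varphi][\psi]\chi\leftrightarrow[\varphi\wedge[\varphi]\psi]\chi$; (A10) $[G,\chi]\varphi\to\chi\wedge[\psi_G\wedge\chi]\varphi$; (A11) $[\langle G\rangle]\varphi\to\langle A\setminus G,\psi_G\rangle\varphi$; closed under (R0) modus ponens; (R1) $\varphi/K_a\varphi$; (R2) $\varphi/[\psi]\varphi$; (R3) $\varphi/[G,\chi]\varphi$; (R4) $\varphi/[\langle G\rangle]\varphi$; (R5) from $\eta(\chi\wedge[\psi_G\wedge\chi]\varphi)$ for all $\psi_G$ infer $\eta([G,\chi]\varphi)$; (R6) from $\eta(\langle A\setminus G,\psi_G\rangle\varphi)$ for all $\psi_G$ infer $\eta([\langle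 G\rangle]\varphi)$. *)

theory Defs
  imports Main "HOL-Library.Countable"
begin

datatype ('a, 'p) fm =
    Atom 'p
  | Neg "('a, 'p) fm"
  | Conj "('a, 'p) fm" "('a, 'p) fm"
  | K 'a "('a, 'p) fm"
  | Ann "('a, 'p) fm" "('a, 'p) fm"          (* [phi]psi *)
  | GAnn "'a set" "('a, 'p) fm" "('a, 'p) fm" (* [G,chi]phi *)
  | CoAnn "'a set" "('a, 'p) fm"              (* [<G>]phi *)

definition Imp :: "('a, 'p) fm \<Rightarrow> ('a, 'p) fm \<Rightarrow> ('a, 'p) fm" where
  "Imp \<phi> \<psi> = Neg (Conj \<phi> (Neg \<psi>))"

definition Iff :: "('a, 'p) fm \<Rightarrow> ('a, 'p) fm \<Rightarrow> ('a, 'p) fm" where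
  "Iff \<phi> \<psi> = Conj (Imp \<phi> \<psi>) (Imp \<psi> \<phi>)"

definition Top :: "('a, 'p) fm" where
  "Top = Neg (Conj (Atom undefined) (Neg (Atom undefined)))"

definition DAnn :: "('a, 'p) fm \<Rightarrow> ('a, 'p) fm \<Rightarrow> ('a, 'p) fm" where
  "DAnn \<psi> \<phi> = Neg (Ann \<psi> (Neg \<phi>))"

definition DGAnn :: "'a set \<Rightarrow> ('a, 'p) fm \<Rightarrow> ('a, 'p) fm \<Rightarrow> ('a, 'p) fm" where
  "DGAnn G \<psi> \<phi> = Neg (GAnn G \<psi> (Neg \<phi>))"

fun conjs :: "('a, 'p) fm list \<Rightarrow> ('a, 'p) fm" where
  "conjs [] = Top"
| "conjs [x] = x"
| "conjs (x # xs) = Conj x (conjs xs)"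

fun is_EL :: "('a, 'p) fm \<Rightarrow> bool" where
  "is_EL (Atom p) = True"
| "is_EL (Neg \<phi>) = is_EL \<phi>"
| "is_EL (Conj \<phi> \<psi>) = (is_EL \<phi> \<and> is_EL \<psi>)"
| "is_EL (K a \<phi>) = is_EL \<phi>"
| "is_EL _ = False"

definition ELG :: "('a::linorder) set \<Rightarrow> ('a, 'p) fm set" where
  "ELG G = {conjs (map (\<lambda>i. K i (f i)) (sorted_list_of_set G)) | f. \<forall>i\<in>G. is_EL (f i)}"

record ('a, 'p, 'w) model =
  W :: "'w set"
  R :: "'a \<Rightarrow> ('w \<times> 'w) set"
  V :: "'p \<Rightarrow> 'w set"

definition is_model :: "('a, 'p, 'w) model \<Rightarrow> bool" where
  "is_model M \<longleftrightarrow> W M \<noteq> {} \<and> (\<forall>a. equiv (W M) (R M a))"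

definition restrict :: "('a, 'p, 'w) model \<Rightarrow> 'w set \<Rightarrow> ('a, 'p, 'w) model" where
  "restrict M S = \<lparr>W = W M \<inter> S, R = (\<lambda>a. R M a \<inter> (S \<times> S)), V = (\<lambda>p. V M p \<inter> S)\<rparr>"

text \<open>Semantics of the epistemic fragment (only used on L_EL formulas).\<close>
primrec sat_el :: "('a, 'p, 'w) model \<Rightarrow> 'w \<Rightarrow> ('a, 'p) fm \<Rightarrow> bool" where
  "sat_el M w (Atom p) = (w \<in> V M p)"
| "sat_el M w (Neg \<phi>) = (\<not> sat_el M w \<phi>)"
| "sat_el M w (Conj \<phi> \<psi>) = (sat_el M w \<phi> \<and> sat_el M w \<psi>)"
| "sat_el M w (K a \<phi>) = (\<forall>v. (w, v) \<in> R M a \<longrightarrow> sat_el M v \<phi>)"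
| "sat_el M w (Ann \<phi> \<psi>) = False"
| "sat_el M w (GAnn G \<phi> \<psi>) = False"
| "sat_el M w (CoAnn G \<phi>) = False"

primrec sat :: "('a::linorder, 'p, 'w) model \<Rightarrow> 'w \<Rightarrow> ('a, 'p) fm \<Rightarrow> bool" where
  "sat M w (Atom p) = (w \<in> V M p)"
| "sat M w (Neg \<phi>) = (\<not> sat M w \<phi>)"
| "sat M w (Conj \<phi> \<psi>) = (sat M w \<phi> \<and> sat M w \<psi>)"
| "sat M w (K a \<phi>) = (\<forall>v. (w, v) \<in> R M a \<longrightarrow> sat M v \<phi>)"
| "sat M w (Ann \<phi> \<psi>) =
     (sat M w \<phi> \<longrightarrow> sat (restrict M {v. sat M v \<phi>}) w \<psi>)"
| "sat M w (GAnn G \<chi> \<phi>) =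
     (sat M w \<chi> \<and>
      (\<forall>\<psi> \<in> ELG G.
         (sat_el M w \<psi> \<and> sat M w \<chi>) \<longrightarrow>
           sat (restrict M {v. sat_el M v \<psi> \<and> sat M v \<chi>}) w \<phi>))"
| "sat M w (CoAnn G \<phi>) =
     (\<forall>\<psi> \<in> ELG G. \<exists>\<chi> \<in> ELG (- G).
         sat_el M w \<psi> \<longrightarrow>
           (sat_el M w \<psi> \<and> sat_el M w \<chi> \<and>
            sat (restrict M {v. sat_el M v \<psi> \<and> sat_el M v \<chi>}) w \<phi>))"

text \<open>Validity: truth at every pointed model. Worlds are taken from the (large enough)
  type of sets of formulas.\<close>
definition valid :: "('a::linorder, 'p) fm \<Rightarrow> bool" where
  "valid \<phi> \<longleftrightarrow>
     (\<forall>(M :: ('a, 'p, ('a, 'p) fm set) model) w. is_model M \<and> w \<in> W M \<longrightarrow> sat M w \<phi>)"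

text \<open>Propositional tautology instances: true under every assignment of truth values
  to the maximal non-Boolean subformulas.\<close>
primrec peval :: "(('a, 'p) fm \<Rightarrow> bool) \<Rightarrow> ('a, 'p) fm \<Rightarrow> bool" where
  "peval v (Atom p) = v (Atom p)"
| "peval v (Neg \<phi>) = (\<not> peval v \<phi>)"
| "peval v (Conj \<phi> \<psi>) = (peval v \<phi> \<and> peval v \<psi>)"
| "peval v (K a \<phi>) = v (K a \<phi>)"
| "peval v (Ann \<phi> \<psi>) = v (Ann \<phi> \<psi>)"
| "peval v (GAnn G \<phi> \<psi>) = v (GAnn G \<phi> \<psi>)"
| "peval v (CoAnn G \<phi>) = v (CoAnn G \<phi>)"

definition tautology :: "('a, 'p) fm \<Rightarrow> bool" where
  "tautology \<phi> \<longleftrightarrow> (\<forall>v. peval v \<phi>)"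

datatype ('a, 'p) nform =
    Hole
  | NImp "('a, 'p) fm" "('a, 'p) nform"
  | NK 'a "('a, 'p) nform"
  | NAnn "('a, 'p) fm" "('a, 'p) nform"

primrec fill :: "('a, 'p) nform \<Rightarrow> ('a, 'p) fm \<Rightarrow> ('a, 'p) fm" where
  "fill Hole \<phi> = \<phi>"
| "fill (NImp \<psi> \<eta>) \<phi> = Imp \<psi> (fill \<eta> \<phi>)"
| "fill (NK a \<eta>) \<phi> = K a (fill \<eta> \<phi>)"
| "fill (NAnn \<psi> \<eta>) \<phi> = Ann \<psi> (fill \<eta> \<phi>)"

inductive CoRGAL :: "('a::linorder, 'p) fm \<Rightarrow> bool" where
  A0: "tautology \<phi> \<Longrightarrow> CoRGAL \<phi>"
| A1: "CoRGAL (Imp (K a (Imp \<phi> \<psi>)) (Imp (K a \<phi>) (K a \<psi>)))"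
| A2: "CoRGAL (Imp (K a \<phi>) \<phi>)"
| A3: "CoRGAL (Imp (K a \<phi>) (K a (K a \<phi>)))"
| A4: "CoRGAL (Imp (Neg (K a \<phi>)) (K a (Neg (K a \<phi>))))"
| A5: "CoRGAL (Iff (Ann \<phi> (Atom p)) (Imp \<phi> (Atom p)))"
| A6: "CoRGAL (Iff (Ann \<phi> (Neg \<psi>)) (Imp \<phi> (Neg (Ann \<phi> \<psi>))))"
| A7: "CoRGAL (Iff (Ann \<phi> (Conj \<psi> \<chi>)) (Conj (Ann \<phi> \<psi>) (Ann \<phi> \<chi>)))"
| A8: "CoRGAL (Iff (Ann \<phi> (K a \<psi>)) (Imp \<phi> (K a (Ann \<phi> \<psi>))))"
| A9: "CoRGAL (Iff (Ann \<phi> (Ann \<psi> \<chi>)) (Ann (Conj \<phi> (Ann \<phi> \<psi>)) \<chi>))"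
| A10: "\<psi> \<in> ELG G \<Longrightarrow> CoRGAL (Imp (GAnn G \<chi> \<phi>) (Conj \<chi> (Ann (Conj \<psi> \<chi>) \<phi>)))"
| A11: "\<psi> \<in> ELG G \<Longrightarrow> CoRGAL (Imp (CoAnn G \<phi>) (DGAnn (- G) \<psi> \<phi>))"
| R0: "CoRGAL \<phi> \<Longrightarrow> CoRGAL (Imp \<phi> \<psi>) \<Longrightarrow> CoRGAL \<psi>"
| R1: "CoRGAL \<phi> \<Longrightarrow> CoRGAL (K a \<phi>)"
| R2: "CoRGAL \<phi> \<Longrightarrow> CoRGAL (Ann \<psi> \<phi>)"
| R3: "CoRGAL \<phi> \<Longrightarrow> CoRGAL (GAnn G \<chi> \<phi>)"
| R4: "CoRGAL \<phi> \<Longrightarrow> CoRGAL (CoAnn G \<phi>)"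
| R5: "(\<forall>\<psi> \<in> ELG G. CoRGAL (fill \<eta> (Conj \<chi> (Ann (Conj \<psi> \<chi>) \<phi>))))
        \<Longrightarrow> CoRGAL (fill \<eta> (GAnn G \<chi> \<phi>))"
| R6: "(\<forall>\<psi> \<in> ELG G. CoRGAL (fill \<eta> (DGAnn (- G) \<psi> \<phi>)))
        \<Longrightarrow> CoRGAL (fill \<eta> (CoAnn G \<phi>))"

end

theory Submission
  imports Defs
begin

text \<open>
  Completeness via a canonical model whose worlds are the maximal consistent theories, where a
  theory must also be closed under the infinitary rules R5 and R6 in every necessity form.
  Lindenbaum's lemma is proved by enumerating formulas: whenever a conclusion of R5 or R6 is
  rejected, one of its premises is refuted at the same step, so the limit is again closed under
  the infinitary rules. The truth lemma goes by well-founded induction on a measure that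
  decreases from an announcement to the right-hand side of its reduction axiom (A5--A9) and from
  a group or coalition announcement to the premises of the corresponding infinitary rule; in
  both cases the semantic and the syntactic side unfold in the same way.
\<close>

section \<open>Countability of formulas\<close>

text \<open>\<open>countable_datatype\<close> does not know that \<open>'a set\<close> is countable for finite
  \<open>'a\<close>, so formulas are coded into a copy of the datatype with the coalition type as a
  parameter.\<close>

datatype ('a, 'g, 'p) fm_code =
    CAtom 'p | CNeg "('a, 'g, 'p) fm_code" | CConj "('a, 'g, 'p) fm_code" "('a, 'g, 'p) fm_code"
  | CK 'a "('a, 'g, 'p) fm_code" | CAnn "('a, 'g, 'p) fm_code" "('a, 'g, 'p) fm_code"
  | CGAnn 'g "('a, 'g, 'p) fm_code" "('a, 'g, 'p) fm_code" | CCoAnn 'g "('a, 'g, 'p) fm_code"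

instance fm_code :: (countable, countable, countable) countable
  by countable_datatype

primrec encode_fm :: "('a, 'p) fm \<Rightarrow> ('a, 'a set, 'p) fm_code" where
  "encode_fm (Atom p) = CAtom p"
| "encode_fm (Neg \<phi>) = CNeg (encode_fm \<phi>)"
| "encode_fm (Conj \<phi> \<psi>) = CConj (encode_fm \<phi>) (encode_fm \<psi>)"
| "encode_fm (K a \<phi>) = CK a (encode_fm \<phi>)"
| "encode_fm (Ann \<phi> \<psi>) = CAnn (encode_fm \<phi>) (encode_fm \<psi>)"
| "encode_fm (GAnn G \<phi> \<psi>) = CGAnn G (encode_fm \<phi>) (encode_fm \<psi>)"
| "encode_fm (CoAnn G \<phi>) = CCoAnn G (encode_fm \<phi>)"

lemma inj_encode_fm: "inj encode_fm"
proof (rule injI)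
  show "encode_fm \<phi> = encode_fm \<psi> \<Longrightarrow> \<phi> = \<psi>" for \<phi> \<psi> :: "('a, 'p) fm"
    by (induction \<phi> arbitrary: \<psi>) (case_tac \<psi>; simp)+
qed

instance fm :: (finite, countable) countable
  by intro_classes (rule exI[of _ "to_nat \<circ> encode_fm"], simp add: inj_compose inj_encode_fm)

section \<open>Derived rules of CoRGAL\<close>

definition Bot :: "('a, 'p) fm" where
  "Bot = Neg Top"

lemma peval_Top [simp]: "peval v Top"
  by (simp add: Top_def)

lemma peval_Bot [simp]: "\<not> peval v Bot"
  by (simp add: Bot_def)

lemma peval_Imp [simp]: "peval v (Imp \<phi> \<psi>) \<longleftrightarrow> (peval v \<phi> \<longrightarrow> peval v \<psi>)"
  by (simp add: Imp_def)

lemma peval_Iff [simp]: "peval v (Iff \<phi> \<psi>) \<longleftrightarrow> (peval v \<phi> \<longleftrightarrow> peval v \<psi>)"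
  by (auto simp: Iff_def)

lemma peval_foldr_Imp [simp]:
  "peval v (foldr Imp \<phi>s \<psi>) \<longleftrightarrow> ((\<forall>\<phi>\<in>set \<phi>s. peval v \<phi>) \<longrightarrow> peval v \<psi>)"
  by (induction \<phi>s) auto

lemma CoRGAL_tautology_mp: "CoRGAL \<phi> \<Longrightarrow> tautology (Imp \<phi> \<psi>) \<Longrightarrow> CoRGAL \<psi>"
  by (erule R0) (rule A0)

lemma CoRGAL_ConjI:
  assumes "CoRGAL \<phi>" "CoRGAL \<psi>"
  shows "CoRGAL (Conj \<phi> \<psi>)"
  by (rule R0[OF assms(2)], rule R0[OF assms(1)], rule A0) (simp add: tautology_def)

text \<open>The infinitary rules R5 and R6 with their necessity form \<open>\<eta>\<close> stripped off: they infer
  \<open>fill \<eta> (rule_conclusion r)\<close> from \<open>fill \<eta> \<psi>\<close> for all \<open>\<psi> \<in> rule_premises r\<close>.\<close>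

datatype ('a, 'p) omega_rule =
    GAnnRule "'a set" "('a, 'p) fm" "('a, 'p) fm"
  | CoAnnRule "'a set" "('a, 'p) fm"

fun rule_premises :: "('a::linorder, 'p) omega_rule \<Rightarrow> ('a, 'p) fm set" where
  "rule_premises (GAnnRule G \<chi> \<phi>) = (\<lambda>\<psi>. Conj \<chi> (Ann (Conj \<psi> \<chi>) \<phi>)) ` ELG G"
| "rule_premises (CoAnnRule G \<phi>) = (\<lambda>\<psi>. DGAnn (- G) \<psi> \<phi>) ` ELG G"

fun rule_conclusion :: "('a, 'p) omega_rule \<Rightarrow> ('a, 'p) fm" where
  "rule_conclusion (GAnnRule G \<chi> \<phi>) = GAnn G \<chi> \<phi>"
| "rule_conclusion (CoAnnRule G \<phi>) = CoAnn G \<phi>"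

lemma CoRGAL_omega_rule:
  "(\<And>\<psi>. \<psi> \<in> rule_premises r \<Longrightarrow> CoRGAL (fill \<eta> \<psi>)) \<Longrightarrow> CoRGAL (fill \<eta> (rule_conclusion r))"
  by (cases r) (auto intro: R5 R6)

lemma fill_rule_conclusion_inject:
  "fill \<eta> (rule_conclusion r) = fill \<eta>' (rule_conclusion r') \<Longrightarrow> \<eta> = \<eta>' \<and> r = r'"
proof (induction \<eta> arbitrary: \<eta>')
  case Hole
  then show ?case
    by (cases \<eta>'; cases r; cases r') (auto simp: Imp_def)
next
  case (NImp \<psi> \<eta>)
  then show ?case
    by (cases \<eta>'; cases r'; simp add: Imp_def)
next
  case (NK a \<eta>)
  then show ?case
    by (cases \<eta>'; cases r'; simp add: Imp_def)
next
  case (NAnn \<psi> \<eta>)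
  then show ?case
    by (cases \<eta>'; cases r'; simp add: Imp_def)
qed

lemma CoRGAL_Ann_if_Neg: "CoRGAL (Imp (Neg \<theta>) (Ann \<theta> \<phi>))"
proof (induction \<phi> arbitrary: \<theta>)
  case (Atom p)
  show ?case
    by (rule CoRGAL_tautology_mp[OF A5[of \<theta> p]]) (simp add: tautology_def)
next
  case (Neg \<phi>)
  show ?case
    by (rule CoRGAL_tautology_mp[OF A6[of \<theta> \<phi>]]) (simp add: tautology_def)
next
  case (Conj \<phi> \<psi>)
  show ?case
    by (rule CoRGAL_tautology_mp[OF CoRGAL_ConjI[OF A7[of \<theta> \<phi> \<psi>]
          CoRGAL_ConjI[OF Conj.IH(1)[of \<theta>] Conj.IH(2)[of \<theta>]]]])
      (simp add: tautology_def)
next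
  case (K a \<phi>)
  show ?case
    by (rule CoRGAL_tautology_mp[OF A8[of \<theta> a \<phi>]]) (simp add: tautology_def)
next
  case (Ann \<psi> \<chi>)
  show ?case
    by (rule CoRGAL_tautology_mp[OF CoRGAL_ConjI[OF A9[of \<theta> \<psi> \<chi>]
          Ann.IH(2)[of "Conj \<theta> (Ann \<theta> \<psi>)"]]])
      (simp add: tautology_def)
next
  case (GAnn G \<chi> \<phi>)
  have "CoRGAL (Imp (Neg \<theta>) (Ann \<theta> (Conj \<chi> (Ann (Conj \<psi> \<chi>) \<phi>))))" for \<psi>
    by (rule CoRGAL_tautology_mp[OF CoRGAL_ConjI[OF A7[of \<theta> \<chi> "Ann (Conj \<psi> \<chi>) \<phi>"]
          CoRGAL_ConjI[OF GAnn.IH(1)[of \<theta>] CoRGAL_ConjI[OF A9[of \<theta> "Conj \<psi> \<chi>" \<phi>]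
            GAnn.IH(2)[of "Conj \<theta> (Ann \<theta> (Conj \<psi> \<chi>))"]]]]])
      (simp add: tautology_def)
  then show ?case
    using CoRGAL_omega_rule[of "GAnnRule G \<chi> \<phi>" "NImp (Neg \<theta>) (NAnn \<theta> Hole)"] by auto
next
  case (CoAnn G \<phi>)
  have "CoRGAL (Imp (Neg \<theta>) (Ann \<theta> (DGAnn (- G) \<psi> \<phi>)))" for \<psi>
    unfolding DGAnn_def
    by (rule CoRGAL_tautology_mp[OF A6[of \<theta> "GAnn (- G) \<psi> (Neg \<phi>)"]]) (simp add: tautology_def)
  then show ?case
    using CoRGAL_omega_rule[of "CoAnnRule G \<phi>" "NImp (Neg \<theta>) (NAnn \<theta> Hole)"] by auto
qed

lemma CoRGAL_Ann_mono:
  assumes "CoRGAL (Imp \<phi> \<psi>)"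
  shows "CoRGAL (Imp (Ann \<theta> \<phi>) (Ann \<theta> \<psi>))"
proof -
  have "CoRGAL (Ann \<theta> (Neg (Conj \<phi> (Neg \<psi>))))"
    using R2[OF assms] by (simp add: Imp_def)
  from CoRGAL_ConjI[OF this CoRGAL_ConjI[OF A6[of \<theta> "Conj \<phi> (Neg \<psi>)"]
      CoRGAL_ConjI[OF A7[of \<theta> \<phi> "Neg \<psi>"] CoRGAL_ConjI[OF A6[of \<theta> \<psi>] CoRGAL_Ann_if_Neg[of \<theta> \<psi>]]]]]
  show ?thesis
    by (rule CoRGAL_tautology_mp) (simp add: tautology_def, blast)
qed

lemma CoRGAL_fill_mono:
  "CoRGAL (Imp \<phi> \<psi>) \<Longrightarrow> CoRGAL (Imp (fill \<eta> \<phi>) (fill \<eta> \<psi>))"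
proof (induction \<eta>)
  case Hole
  then show ?case
    by simp
next
  case (NImp \<chi> \<eta>)
  show ?case
    by (rule CoRGAL_tautology_mp[OF NImp.IH[OF NImp.prems]]) (simp add: tautology_def)
next
  case (NK a \<eta>)
  then show ?case
    using R0[OF R1 A1] by simp
next
  case (NAnn \<theta> \<eta>)
  then show ?case
    using CoRGAL_Ann_mono by simp
qed

lemma CoRGAL_rule_conclusion_imp_premise:
  "\<psi> \<in> rule_premises r \<Longrightarrow> CoRGAL (Imp (fill \<eta> (rule_conclusion r)) (fill \<eta> \<psi>))"
  by (cases r) (auto intro: CoRGAL_fill_mono A10 A11)

section \<open>Theories and Lindenbaum's lemma\<close>

definition is_theory :: "('a::linorder, 'p) fm set \<Rightarrow> bool" where
  "is_theory T \<longleftrightarrow> Collect CoRGAL \<subseteq> T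
     \<and> (\<forall>\<phi> \<psi>. \<phi> \<in> T \<longrightarrow> Imp \<phi> \<psi> \<in> T \<longrightarrow> \<psi> \<in> T)
     \<and> (\<forall>\<eta> r. fill \<eta> ` rule_premises r \<subseteq> T \<longrightarrow> fill \<eta> (rule_conclusion r) \<in> T)"

definition consistent :: "('a, 'p) fm set \<Rightarrow> bool" where
  "consistent T \<longleftrightarrow> Bot \<notin> T"

definition mcs :: "('a::linorder, 'p) fm set \<Rightarrow> bool" where
  "mcs \<Gamma> \<longleftrightarrow> is_theory \<Gamma> \<and> consistent \<Gamma> \<and> (\<forall>\<phi>. \<phi> \<in> \<Gamma> \<or> Neg \<phi> \<in> \<Gamma>)"

definition theory_plus :: "('a, 'p) fm set \<Rightarrow> ('a, 'p) fm \<Rightarrow> ('a, 'p) fm set" where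
  "theory_plus T \<phi> = {\<psi>. Imp \<phi> \<psi> \<in> T}"

lemma theory_CoRGAL: "is_theory T \<Longrightarrow> CoRGAL \<phi> \<Longrightarrow> \<phi> \<in> T"
  unfolding is_theory_def by blast

lemma theory_mp: "is_theory T \<Longrightarrow> \<phi> \<in> T \<Longrightarrow> Imp \<phi> \<psi> \<in> T \<Longrightarrow> \<psi> \<in> T"
  unfolding is_theory_def by blast

lemma theory_omega_rule:
  "is_theory T \<Longrightarrow> (\<And>\<psi>. \<psi> \<in> rule_premises r \<Longrightarrow> fill \<eta> \<psi> \<in> T) \<Longrightarrow> fill \<eta> (rule_conclusion r) \<in> T"
  unfolding is_theory_def by blast

lemma theory_tautology:
  assumes T: "is_theory T" and "tautology (foldr Imp \<phi>s \<psi>)" and "set \<phi>s \<subseteq> T"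
  shows "\<psi> \<in> T"
proof -
  have "foldr Imp \<phi>s \<psi> \<in> T"
    using assms(2) by (intro theory_CoRGAL[OF T] A0)
  then show ?thesis
    using assms(3) by (induction \<phi>s) (auto intro: theory_mp[OF T])
qed

lemma is_theory_CoRGAL: "is_theory (Collect CoRGAL)"
  unfolding is_theory_def by (auto intro: R0 CoRGAL_omega_rule simp: image_subset_iff)

lemma is_theory_theory_plus:
  assumes T: "is_theory T"
  shows "is_theory (theory_plus T \<phi>)"
  unfolding is_theory_def theory_plus_def
proof (intro conjI allI impI subsetI; simp)
  show "Imp \<phi> \<psi> \<in> T" if "CoRGAL \<psi>" for \<psi>
    by (rule theory_tautology[OF T, of "[\<psi>]"]) (auto simp: tautology_def that T theory_CoRGAL)
  show "Imp \<phi> \<chi> \<in> T" if "Imp \<phi> \<psi> \<in> T" "Imp \<phi> (Imp \<psi> \<chi>) \<in> T" for \<psi> \<chi>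
    by (rule theory_tautology[OF T, of "[Imp \<phi> \<psi>, Imp \<phi> (Imp \<psi> \<chi>)]"]) (auto simp: tautology_def that)
  show "Imp \<phi> (fill \<eta> (rule_conclusion r)) \<in> T"
    if "fill \<eta> ` rule_premises r \<subseteq> {\<psi>. Imp \<phi> \<psi> \<in> T}" for \<eta> r
    using theory_omega_rule[OF T, of r "NImp \<phi> \<eta>"] that by auto
qed

lemma subset_theory_plus:
  assumes T: "is_theory T"
  shows "T \<subseteq> theory_plus T \<phi>"
proof
  show "\<psi> \<in> theory_plus T \<phi>" if "\<psi> \<in> T" for \<psi>
    using theory_tautology[OF T, of "[\<psi>]" "Imp \<phi> \<psi>"] that
    by (simp add: theory_plus_def tautology_def)
qed

lemma mem_theory_plus: "is_theory T \<Longrightarrow> \<phi> \<in> theory_plus T \<phi>"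
  unfolding theory_plus_def by (auto intro!: theory_CoRGAL A0 simp: tautology_def)

lemma Neg_if_inconsistent_theory_plus:
  assumes T: "is_theory T" and "\<not> consistent (theory_plus T \<phi>)"
  shows "Neg \<phi> \<in> T"
  using assms(2) theory_tautology[OF T, of "[Imp \<phi> Bot]" "Neg \<phi>"]
  by (simp add: consistent_def theory_plus_def tautology_def)

lemma inconsistent_if_Neg:
  assumes T: "is_theory T" and "\<phi> \<in> T" "Neg \<phi> \<in> T"
  shows "\<not> consistent T"
  using assms(2,3) theory_tautology[OF T, of "[\<phi>, Neg \<phi>]" Bot]
  by (simp add: consistent_def tautology_def)

lemma consistent_theory_plus_Neg:
  assumes T: "is_theory T" and "\<phi> \<notin> T"
  shows "consistent (theory_plus T (Neg \<phi>))"
  using assms(2) Neg_if_inconsistent_theory_plus[OF T, of "Neg \<phi>"]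
    theory_tautology[OF T, of "[Neg (Neg \<phi>)]" \<phi>]
  by (auto simp: tautology_def)

lemma refutable_premise:
  assumes T: "is_theory T" "consistent T"
    and "\<not> consistent (theory_plus T (fill \<eta> (rule_conclusion r)))"
  shows "\<exists>\<psi>\<in>rule_premises r. consistent (theory_plus T (Neg (fill \<eta> \<psi>)))"
proof (rule ccontr)
  assume "\<not> ?thesis"
  then have "fill \<eta> \<psi> \<in> T" if "\<psi> \<in> rule_premises r" for \<psi>
    using that consistent_theory_plus_Neg[OF T(1)] by blast
  then have "fill \<eta> (rule_conclusion r) \<in> T"
    by (rule theory_omega_rule[OF T(1)])
  then show False
    using inconsistent_if_Neg[OF T(1)] Neg_if_inconsistent_theory_plus[OF T(1) assms(3)] T(2)
    by blast
qed

definition omega_witness :: "('a::linorder, 'p) fm set \<Rightarrow> ('a, 'p) fm \<Rightarrow> ('a, 'p) fm" where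
  "omega_witness T \<phi> = (SOME \<psi>. \<exists>\<eta> r. \<phi> = fill \<eta> (rule_conclusion r)
     \<and> \<psi> \<in> fill \<eta> ` rule_premises r \<and> consistent (theory_plus T (Neg \<psi>)))"

text \<open>Enumerating formulas alone suffices: a formula has at most one decomposition
  \<open>fill \<eta> (rule_conclusion r)\<close> by \<open>fill_rule_conclusion_inject\<close>, and when it is rejected, one
  of the corresponding premises is refuted in the same step.\<close>

definition lindenbaum_step :: "('a::linorder, 'p) fm set \<Rightarrow> ('a, 'p) fm \<Rightarrow> ('a, 'p) fm set" where
  "lindenbaum_step T \<phi> =
     (if consistent (theory_plus T \<phi>) then theory_plus T \<phi>
      else if \<exists>\<eta> r. \<phi> = fill \<eta> (rule_conclusion r) then theory_plus T (Neg (omega_witness T \<phi>))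
      else theory_plus T (Neg \<phi>))"

lemma omega_witness:
  assumes T: "is_theory T" "consistent T"
    and \<phi>: "\<phi> = fill \<eta> (rule_conclusion r)" and inc: "\<not> consistent (theory_plus T \<phi>)"
  shows "omega_witness T \<phi> \<in> fill \<eta> ` rule_premises r"
    and "consistent (theory_plus T (Neg (omega_witness T \<phi>)))"
proof -
  have "\<exists>\<psi> \<eta> r. \<phi> = fill \<eta> (rule_conclusion r)
     \<and> \<psi> \<in> fill \<eta> ` rule_premises r \<and> consistent (theory_plus T (Neg \<psi>))"
    using refutable_premise[OF T] \<phi> inc by blast
  from someI_ex[OF this] obtain \<eta>' r' where "\<phi> = fill \<eta>' (rule_conclusion r')"
    and "omega_witness T \<phi> \<in> fill \<eta>' ` rule_premises r'"
    and "consistent (theory_plus T (Neg (omega_witness T \<phi>)))"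
    unfolding omega_witness_def by blast
  then show "omega_witness T \<phi> \<in> fill \<eta> ` rule_premises r"
    and "consistent (theory_plus T (Neg (omega_witness T \<phi>)))"
    using fill_rule_conclusion_inject \<phi> by blast+
qed

lemma lindenbaum_step:
  assumes T: "is_theory T" "consistent T"
  shows "is_theory (lindenbaum_step T \<phi>)" and "consistent (lindenbaum_step T \<phi>)"
    and "T \<subseteq> lindenbaum_step T \<phi>" and "\<phi> \<in> lindenbaum_step T \<phi> \<or> Neg \<phi> \<in> lindenbaum_step T \<phi>"
proof -
  consider (accepted) "consistent (theory_plus T \<phi>)"
    | (omega) \<eta> r where "\<not> consistent (theory_plus T \<phi>)" "\<phi> = fill \<eta> (rule_conclusion r)"
    | (plain) "\<not> consistent (theory_plus T \<phi>)" "\<nexists>\<eta> r. \<phi> = fill \<eta> (rule_conclusion r)"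
    by blast
  then obtain \<psi> where "lindenbaum_step T \<phi> = theory_plus T \<psi>"
    and "consistent (theory_plus T \<psi>)" and "\<psi> = \<phi> \<or> Neg \<phi> \<in> T"
  proof cases
    case accepted
    then show ?thesis
      using that[of \<phi>] by (simp add: lindenbaum_step_def)
  next
    case omega
    then have "lindenbaum_step T \<phi> = theory_plus T (Neg (omega_witness T \<phi>))"
      by (auto simp: lindenbaum_step_def)
    then show ?thesis
      using that omega_witness(2)[OF T omega(2,1)] Neg_if_inconsistent_theory_plus[OF T(1) omega(1)]
      by blast
  next
    case plain
    have "Neg \<phi> \<in> T"
      using Neg_if_inconsistent_theory_plus[OF T(1) plain(1)] .
    then have "\<phi> \<notin> T"
      using inconsistent_if_Neg[OF T(1)] T(2) by blast
    then show ?thesis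
      using that[of "Neg \<phi>"] plain \<open>Neg \<phi> \<in> T\<close> consistent_theory_plus_Neg[OF T(1)]
      by (simp add: lindenbaum_step_def)
  qed
  then show "is_theory (lindenbaum_step T \<phi>)" and "consistent (lindenbaum_step T \<phi>)"
    and "T \<subseteq> lindenbaum_step T \<phi>" and "\<phi> \<in> lindenbaum_step T \<phi> \<or> Neg \<phi> \<in> lindenbaum_step T \<phi>"
    using is_theory_theory_plus[OF T(1)] subset_theory_plus[OF T(1)] mem_theory_plus[OF T(1)]
    by auto
qed

lemma lindenbaum_step_omega:
  assumes T: "is_theory T" "consistent T" and \<phi>: "\<phi> = fill \<eta> (rule_conclusion r)"
    and "\<phi> \<notin> lindenbaum_step T \<phi>"
  shows "\<exists>\<psi>\<in>rule_premises r. Neg (fill \<eta> \<psi>) \<in> lindenbaum_step T \<phi>"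
proof -
  have inc: "\<not> consistent (theory_plus T \<phi>)"
    using assms(4) mem_theory_plus[OF T(1)] by (auto simp: lindenbaum_step_def)
  then have "lindenbaum_step T \<phi> = theory_plus T (Neg (omega_witness T \<phi>))"
    using \<phi> by (auto simp: lindenbaum_step_def)
  then show ?thesis
    using omega_witness(1)[OF T \<phi> inc] mem_theory_plus[OF T(1)] by auto
qed

primrec lindenbaum_chain ::
  "('a::{finite,linorder}, 'p::countable) fm set \<Rightarrow> nat \<Rightarrow> ('a, 'p) fm set" where
  "lindenbaum_chain T 0 = T"
| "lindenbaum_chain T (Suc n) = lindenbaum_step (lindenbaum_chain T n) (from_nat n)"

definition lindenbaum_limit ::
  "('a::{finite,linorder}, 'p::countable) fm set \<Rightarrow> ('a, 'p) fm set" where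
  "lindenbaum_limit T = (\<Union>n. lindenbaum_chain T n)"

lemma subset_lindenbaum_limit: "T \<subseteq> lindenbaum_limit T"
  unfolding lindenbaum_limit_def using lindenbaum_chain.simps(1) by blast

context
  fixes T :: "('a::{finite,linorder}, 'p::countable) fm set"
  assumes T: "is_theory T" "consistent T"
begin

lemma lindenbaum_chain:
  "is_theory (lindenbaum_chain T n)" "consistent (lindenbaum_chain T n)"
  by (induction n) (simp_all add: T lindenbaum_step)

lemma mono_lindenbaum_chain: "mono (lindenbaum_chain T)"
proof (rule mono_iff_le_Suc[THEN iffD2], intro allI)
  show "lindenbaum_chain T n \<subseteq> lindenbaum_chain T (Suc n)" for n
    using lindenbaum_step(3)[OF lindenbaum_chain] by simp
qed

lemma lindenbaum_limit_common_stage: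
  assumes "\<phi> \<in> lindenbaum_limit T" "\<psi> \<in> lindenbaum_limit T"
  shows "\<exists>n. \<phi> \<in> lindenbaum_chain T n \<and> \<psi> \<in> lindenbaum_chain T n"
proof -
  obtain m k where "\<phi> \<in> lindenbaum_chain T m" "\<psi> \<in> lindenbaum_chain T k"
    using assms by (auto simp: lindenbaum_limit_def)
  moreover have "lindenbaum_chain T m \<subseteq> lindenbaum_chain T (max m k)"
    and "lindenbaum_chain T k \<subseteq> lindenbaum_chain T (max m k)"
    using monoD[OF mono_lindenbaum_chain] by simp_all
  ultimately show ?thesis
    by blast
qed

lemma lindenbaum_limit_not_both: "\<phi> \<notin> lindenbaum_limit T \<or> Neg \<phi> \<notin> lindenbaum_limit T"
  using lindenbaum_limit_common_stage inconsistent_if_Neg lindenbaum_chain by blast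

lemma is_theory_lindenbaum_limit: "is_theory (lindenbaum_limit T)"
  unfolding is_theory_def
proof (intro conjI allI impI)
  show "Collect CoRGAL \<subseteq> lindenbaum_limit T"
    using theory_CoRGAL[OF T(1)] subset_lindenbaum_limit by blast
  show "\<psi> \<in> lindenbaum_limit T" if "\<phi> \<in> lindenbaum_limit T" "Imp \<phi> \<psi> \<in> lindenbaum_limit T" for \<phi> \<psi>
    using lindenbaum_limit_common_stage[OF that] theory_mp[OF lindenbaum_chain(1)]
    unfolding lindenbaum_limit_def by blast
  show "fill \<eta> (rule_conclusion r) \<in> lindenbaum_limit T"
    if prems: "fill \<eta> ` rule_premises r \<subseteq> lindenbaum_limit T" for \<eta> r
  proof (rule ccontr)
    let ?\<phi> = "fill \<eta> (rule_conclusion r)"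
    assume "?\<phi> \<notin> lindenbaum_limit T"
    then have "?\<phi> \<notin> lindenbaum_chain T (Suc (to_nat ?\<phi>))"
      unfolding lindenbaum_limit_def by blast
    then have "?\<phi> \<notin> lindenbaum_step (lindenbaum_chain T (to_nat ?\<phi>)) ?\<phi>"
      by simp
    from lindenbaum_step_omega[OF lindenbaum_chain refl this] obtain \<psi>
      where "\<psi> \<in> rule_premises r" "Neg (fill \<eta> \<psi>) \<in> lindenbaum_chain T (Suc (to_nat ?\<phi>))"
      by auto
    then show False
      using prems lindenbaum_limit_not_both unfolding lindenbaum_limit_def by blast
  qed
qed

lemma mcs_lindenbaum_limit: "mcs (lindenbaum_limit T)"
proof -
  have "\<phi> \<in> lindenbaum_limit T \<or> Neg \<phi> \<in> lindenbaum_limit T" for \<phi>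
    using lindenbaum_step(4)[OF lindenbaum_chain(1,2)[of "to_nat \<phi>"], of \<phi>]
      lindenbaum_chain.simps(2)[of T "to_nat \<phi>"]
    unfolding lindenbaum_limit_def by (auto simp del: lindenbaum_chain.simps)
  moreover have "consistent (lindenbaum_limit T)"
    using lindenbaum_chain(2) by (auto simp: consistent_def lindenbaum_limit_def)
  ultimately show ?thesis
    using is_theory_lindenbaum_limit by (simp add: mcs_def)
qed

end

lemma lindenbaum_avoiding:
  fixes T :: "('a::{finite,linorder}, 'p::countable) fm set"
  assumes T: "is_theory T" and "\<phi> \<notin> T"
  shows "\<exists>\<Gamma>. mcs \<Gamma> \<and> T \<subseteq> \<Gamma> \<and> \<phi> \<notin> \<Gamma>"
proof -
  let ?T' = "theory_plus T (Neg \<phi>)"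
  have T': "is_theory ?T'" "consistent ?T'"
    using is_theory_theory_plus[OF T] consistent_theory_plus_Neg[OF T assms(2)] .
  let ?\<Gamma> = "lindenbaum_limit ?T'"
  have "T \<subseteq> ?\<Gamma>" "Neg \<phi> \<in> ?\<Gamma>"
    using subset_theory_plus[OF T] mem_theory_plus[OF T] subset_lindenbaum_limit by blast+
  then show ?thesis
    using mcs_lindenbaum_limit[OF T'] inconsistent_if_Neg unfolding mcs_def by blast
qed

section \<open>Maximal consistent sets\<close>

lemma mcs_CoRGAL: "mcs \<Gamma> \<Longrightarrow> CoRGAL \<phi> \<Longrightarrow> \<phi> \<in> \<Gamma>"
  by (simp add: mcs_def theory_CoRGAL)

lemma mcs_tautology:
  "mcs \<Gamma> \<Longrightarrow> tautology (foldr Imp \<phi>s \<psi>) \<Longrightarrow> set \<phi>s \<subseteq> \<Gamma> \<Longrightarrow> \<psi> \<in> \<Gamma>"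
  using theory_tautology[of \<Gamma>] by (simp add: mcs_def)

lemma mcs_Neg: "mcs \<Gamma> \<Longrightarrow> Neg \<phi> \<in> \<Gamma> \<longleftrightarrow> \<phi> \<notin> \<Gamma>"
  unfolding mcs_def using inconsistent_if_Neg by blast

lemma mcs_Conj:
  assumes "mcs \<Gamma>"
  shows "Conj \<phi> \<psi> \<in> \<Gamma> \<longleftrightarrow> \<phi> \<in> \<Gamma> \<and> \<psi> \<in> \<Gamma>"
proof (intro iffI conjI)
  assume "Conj \<phi> \<psi> \<in> \<Gamma>"
  then show "\<phi> \<in> \<Gamma>" and "\<psi> \<in> \<Gamma>"
    using mcs_tautology[OF assms, of "[Conj \<phi> \<psi>]" \<phi>] mcs_tautology[OF assms, of "[Conj \<phi> \<psi>]" \<psi>]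
    by (simp_all add: tautology_def)
next
  assume "\<phi> \<in> \<Gamma> \<and> \<psi> \<in> \<Gamma>"
  then show "Conj \<phi> \<psi> \<in> \<Gamma>"
    using mcs_tautology[OF assms, of "[\<phi>, \<psi>]" "Conj \<phi> \<psi>"] by (simp add: tautology_def)
qed

lemma mcs_Imp: "mcs \<Gamma> \<Longrightarrow> Imp \<phi> \<psi> \<in> \<Gamma> \<longleftrightarrow> (\<phi> \<in> \<Gamma> \<longrightarrow> \<psi> \<in> \<Gamma>)"
  by (simp add: Imp_def mcs_Conj mcs_Neg)

lemma mcs_CoRGAL_mp: "mcs \<Gamma> \<Longrightarrow> CoRGAL (Imp \<phi> \<psi>) \<Longrightarrow> \<phi> \<in> \<Gamma> \<Longrightarrow> \<psi> \<in> \<Gamma>"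
  using mcs_CoRGAL mcs_Imp by blast

lemma mcs_CoRGAL_Iff: "mcs \<Gamma> \<Longrightarrow> CoRGAL (Iff \<phi> \<psi>) \<Longrightarrow> \<phi> \<in> \<Gamma> \<longleftrightarrow> \<psi> \<in> \<Gamma>"
  using mcs_CoRGAL[of \<Gamma> "Iff \<phi> \<psi>"] by (auto simp: Iff_def mcs_Conj mcs_Imp)

lemma mcs_fill_rule_conclusion:
  assumes "mcs \<Gamma>"
  shows "fill \<eta> (rule_conclusion r) \<in> \<Gamma> \<longleftrightarrow> (\<forall>\<psi>\<in>rule_premises r. fill \<eta> \<psi> \<in> \<Gamma>)"
  using assms mcs_CoRGAL_mp[OF assms CoRGAL_rule_conclusion_imp_premise] theory_omega_rule
  unfolding mcs_def by blast

definition unbox :: "'a \<Rightarrow> ('a, 'p) fm set \<Rightarrow> ('a, 'p) fm set" where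
  "unbox a \<Gamma> = {\<phi>. K a \<phi> \<in> \<Gamma>}"

lemma is_theory_unbox:
  assumes \<Gamma>: "is_theory \<Gamma>"
  shows "is_theory (unbox a \<Gamma>)"
  unfolding is_theory_def unbox_def
proof (intro conjI allI impI subsetI; simp)
  show "K a \<phi> \<in> \<Gamma>" if "CoRGAL \<phi>" for \<phi>
    using theory_CoRGAL[OF \<Gamma> R1[OF that]] .
  show "K a \<psi> \<in> \<Gamma>" if "K a \<phi> \<in> \<Gamma>" "K a (Imp \<phi> \<psi>) \<in> \<Gamma>" for \<phi> \<psi>
    using theory_CoRGAL[OF \<Gamma> A1[of a \<phi> \<psi>]] that theory_mp[OF \<Gamma>] by blast
  show "K a (fill \<eta> (rule_conclusion r)) \<in> \<Gamma>"
    if "fill \<eta> ` rule_premises r \<subseteq> {\<phi>. K a \<phi> \<in> \<Gamma>}" for \<eta> r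
    using theory_omega_rule[OF \<Gamma>, of r "NK a \<eta>"] that by auto
qed

lemma mcs_K:
  fixes \<Gamma> :: "('a::{finite,linorder}, 'p::countable) fm set"
  assumes "mcs \<Gamma>"
  shows "K a \<psi> \<in> \<Gamma> \<longleftrightarrow> (\<forall>\<Delta>. mcs \<Delta> \<and> unbox a \<Gamma> \<subseteq> \<Delta> \<longrightarrow> \<psi> \<in> \<Delta>)"
proof
  assume "\<forall>\<Delta>. mcs \<Delta> \<and> unbox a \<Gamma> \<subseteq> \<Delta> \<longrightarrow> \<psi> \<in> \<Delta>"
  then show "K a \<psi> \<in> \<Gamma>"
    using lindenbaum_avoiding[OF is_theory_unbox, of \<Gamma> \<psi> a] assms
    unfolding mcs_def unbox_def by blast
qed (auto simp: unbox_def)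

section \<open>Semantics\<close>

lemma sat_el_sat: "is_EL \<phi> \<Longrightarrow> sat M w \<phi> \<longleftrightarrow> sat_el M w \<phi>"
  by (induction \<phi> arbitrary: w) auto

lemma is_EL_conjs: "(\<And>\<phi>. \<phi> \<in> set \<phi>s \<Longrightarrow> is_EL \<phi>) \<Longrightarrow> is_EL (conjs \<phi>s)"
  by (induction \<phi>s rule: conjs.induct) (auto simp: Top_def)

lemma is_EL_ELG:
  fixes G :: "'a::{finite,linorder} set"
  shows "\<psi> \<in> ELG G \<Longrightarrow> is_EL \<psi>"
  unfolding ELG_def by (auto intro!: is_EL_conjs)

lemma ELG_nonempty: "ELG G \<noteq> {}"
  unfolding ELG_def by (auto intro: exI[of _ "\<lambda>_. Atom undefined"])

lemma restrict_restrict: "restrict (restrict M A) B = restrict M (A \<inter> B)"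
  by (auto simp: restrict_def)

lemma sat_rule_conclusion:
  fixes r :: "('a::{finite,linorder}, 'p) omega_rule"
  shows "sat M w (rule_conclusion r) \<longleftrightarrow> (\<forall>\<psi>\<in>rule_premises r. sat M w \<psi>)"
proof (cases r)
  case (GAnnRule G \<chi> \<phi>)
  obtain \<psi>\<^sub>0 :: "('a, 'p) fm" where "\<psi>\<^sub>0 \<in> ELG G"
    using ELG_nonempty by blast
  then show ?thesis
    using GAnnRule by (auto simp: sat_el_sat[OF is_EL_ELG])
next
  case (CoAnnRule G \<phi>)
  obtain \<chi>\<^sub>0 :: "('a, 'p) fm" where "\<chi>\<^sub>0 \<in> ELG (- G)"
    using ELG_nonempty by blast
  then show ?thesis
    using CoAnnRule by (auto simp: DGAnn_def sat_el_sat[OF is_EL_ELG] conj_commute)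
qed

lemma sat_fill_rule_conclusion:
  fixes r :: "('a::{finite,linorder}, 'p) omega_rule"
  shows "sat M w (fill \<eta> (rule_conclusion r)) \<longleftrightarrow> (\<forall>\<psi>\<in>rule_premises r. sat M w (fill \<eta> \<psi>))"
  by (induction \<eta> arbitrary: M w) (auto simp: Imp_def sat_rule_conclusion)

text \<open>The right-hand sides of the reduction axioms A5--A9; group and coalition announcements
  are reduced by the infinitary rules instead.\<close>

fun reduce_Ann :: "('a, 'p) fm \<Rightarrow> ('a, 'p) fm \<Rightarrow> ('a, 'p) fm" where
  "reduce_Ann \<theta> (Atom p) = Imp \<theta> (Atom p)"
| "reduce_Ann \<theta> (Neg \<phi>) = Imp \<theta> (Neg (Ann \<theta> \<phi>))"
| "reduce_Ann \<theta> (Conj \<phi> \<psi>) = Conj (Ann \<theta> \<phi>) (Ann \<theta> \<psi>)"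
| "reduce_Ann \<theta> (K a \<phi>) = Imp \<theta> (K a (Ann \<theta> \<phi>))"
| "reduce_Ann \<theta> (Ann \<psi> \<chi>) = Ann (Conj \<theta> (Ann \<theta> \<psi>)) \<chi>"
| "reduce_Ann \<theta> \<phi> = Ann \<theta> \<phi>"

lemma CoRGAL_reduce_Ann: "CoRGAL (Iff (Ann \<theta> \<phi>) (reduce_Ann \<theta> \<phi>))"
  by (cases \<phi>) (auto intro: A5 A6 A7 A8 A9 A0 simp: tautology_def)

lemma sat_reduce_Ann: "sat M w (Ann \<theta> \<phi>) \<longleftrightarrow> sat M w (reduce_Ann \<theta> \<phi>)"
proof (cases \<phi>)
  case (Ann \<psi> \<chi>)
  have "{v. sat M v \<theta>} \<inter> {v. sat (restrict M {v. sat M v \<theta>}) v \<psi>}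
      = {v. sat M v (Conj \<theta> (Ann \<theta> \<psi>))}"
    by auto
  then show ?thesis
    using Ann by (auto simp: restrict_restrict simp del: sat.simps(3))
qed (auto simp: restrict_def Imp_def)

section \<open>A well-founded order for the truth lemma\<close>

text \<open>\<open>omega_rank\<close> drops from the conclusion of an infinitary rule to its premises, and
  \<open>complexity\<close> (with \<open>omega_rank\<close> not increasing) drops from \<open>Ann \<theta> \<phi>\<close> to
  \<open>reduce_Ann \<theta> \<phi>\<close>; the weight \<open>4 + complexity \<theta>\<close> makes room for the copies of \<open>\<theta>\<close>
  on the right-hand sides of A5--A9.\<close>

fun omega_rank :: "('a, 'p) fm \<Rightarrow> nat" where
  "omega_rank (Atom p) = 0"
| "omega_rank (Neg \<phi>) = omega_rank \<phi>"
| "omega_rank (Conj \<phi> \<psi>) = max (omega_rank \<phi>) (omega_rank \<psi>)"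
| "omega_rank (K a \<phi>) = omega_rank \<phi>"
| "omega_rank (Ann \<phi> \<psi>) = omega_rank \<phi> + omega_rank \<psi>"
| "omega_rank (GAnn G \<chi> \<phi>) = omega_rank \<chi> + omega_rank \<phi> + 1"
| "omega_rank (CoAnn G \<phi>) = omega_rank \<phi> + 2"

fun complexity :: "('a, 'p) fm \<Rightarrow> nat" where
  "complexity (Atom p) = 1"
| "complexity (Neg \<phi>) = 1 + complexity \<phi>"
| "complexity (Conj \<phi> \<psi>) = 1 + max (complexity \<phi>) (complexity \<psi>)"
| "complexity (K a \<phi>) = 1 + complexity \<phi>"
| "complexity (Ann \<phi> \<psi>) = (4 + complexity \<phi>) * complexity \<psi>"
| "complexity (GAnn G \<chi> \<phi>) = 1"
| "complexity (CoAnn G \<phi>) = 1"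

definition simpler :: "(('a, 'p) fm \<times> ('a, 'p) fm) set" where
  "simpler = measures [omega_rank, complexity]"

lemma wf_simpler: "wf simpler"
  by (simp add: simpler_def)

lemma simplerI:
  "omega_rank \<psi> \<le> omega_rank \<phi> \<Longrightarrow> complexity \<psi> < complexity \<phi> \<Longrightarrow> (\<psi>, \<phi>) \<in> simpler"
  by (auto simp: simpler_def)

lemma complexity_pos: "0 < complexity \<phi>"
  by (induction \<phi>) auto

lemma omega_rank_EL: "is_EL \<psi> \<Longrightarrow> omega_rank \<psi> = 0"
  by (induction \<psi>) auto

lemma omega_rank_rule_premise:
  fixes r :: "('a::{finite,linorder}, 'p) omega_rule"
  shows "\<psi> \<in> rule_premises r \<Longrightarrow> omega_rank \<psi> < omega_rank (rule_conclusion r)"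
  by (cases r) (auto simp: DGAnn_def omega_rank_EL[OF is_EL_ELG])

lemma simpler_reduce_Ann:
  assumes "\<nexists>r. \<phi> = rule_conclusion r"
  shows "(reduce_Ann \<theta> \<phi>, Ann \<theta> \<phi>) \<in> simpler"
proof (cases \<phi>)
  case (Ann \<psi> \<chi>)
  have "complexity \<theta> \<le> (4 + complexity \<theta>) * complexity \<psi>"
    using complexity_pos[of \<psi>] by (cases "complexity \<psi>") auto
  moreover have "5 + (4 + complexity \<theta>) * complexity \<psi> < (4 + complexity \<theta>) * (4 + complexity \<psi>)"
    by (simp add: algebra_simps)
  then have "(5 + (4 + complexity \<theta>) * complexity \<psi>) * complexity \<chi>
      < (4 + complexity \<theta>) * ((4 + complexity \<psi>) * complexity \<chi>)"
    using complexity_pos[of \<chi>] by (simp add: mult.assoc[symmetric])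
  ultimately show ?thesis
    using Ann by (simp add: simpler_def max_def)
next
  case (Conj \<psi> \<chi>)
  then show ?thesis
    by (auto simp: simpler_def nat_mult_max_right max_def)
next
  case (GAnn G \<chi> \<psi>)
  then show ?thesis
    using assms by (metis rule_conclusion.simps(1))
next
  case (CoAnn G \<psi>)
  then show ?thesis
    using assms by (metis rule_conclusion.simps(2))
qed (use complexity_pos[of \<theta>] in \<open>auto simp: simpler_def Imp_def algebra_simps max_def\<close>)

lemma reduction_cases:
  fixes \<phi> :: "('a::{finite,linorder}, 'p) fm"
  obtains (atomic) p where "\<phi> = Atom p"
  | (negation) \<psi> where "\<phi> = Neg \<psi>" "(\<psi>, \<phi>) \<in> simpler"
  | (conjunction) \<psi> \<chi> where "\<phi> = Conj \<psi> \<chi>" "(\<psi>, \<phi>) \<in> simpler" "(\<chi>, \<phi>) \<in> simpler"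
  | (knowledge) a \<psi> where "\<phi> = K a \<psi>" "(\<psi>, \<phi>) \<in> simpler"
  | (announcement) \<theta> \<psi> where "\<phi> = Ann \<theta> \<psi>" "(reduce_Ann \<theta> \<psi>, \<phi>) \<in> simpler"
  | (omega) \<eta> r where "\<phi> = fill \<eta> (rule_conclusion r)"
      "\<And>\<psi>. \<psi> \<in> rule_premises r \<Longrightarrow> (fill \<eta> \<psi>, \<phi>) \<in> simpler"
proof (cases \<phi>)
  case (Neg \<psi>)
  then show ?thesis
    using negation simplerI[of \<psi> \<phi>] by simp
next
  case (Conj \<psi> \<chi>)
  then show ?thesis
    using conjunction simplerI[of \<psi> \<phi>] simplerI[of \<chi> \<phi>] by simp
next
  case (K a \<psi>)
  then show ?thesis
    using knowledge simplerI[of \<psi> \<phi>] by simp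
next
  case (Ann \<theta> \<psi>)
  show ?thesis
  proof (cases "\<exists>r. \<psi> = rule_conclusion r")
    case True
    then obtain r where "\<psi> = rule_conclusion r"
      by blast
    then show ?thesis
      using omega[of "NAnn \<theta> Hole" r] Ann omega_rank_rule_premise[of _ r] by (simp add: simpler_def)
  next
    case False
    then show ?thesis
      using announcement Ann simpler_reduce_Ann by blast
  qed
next
  case (GAnn G \<chi> \<psi>)
  then show ?thesis
    using omega[of Hole "GAnnRule G \<chi> \<psi>"] omega_rank_rule_premise[of _ "GAnnRule G \<chi> \<psi>"]
    by (simp add: simpler_def)
next
  case (CoAnn G \<psi>)
  then show ?thesis
    using omega[of Hole "CoAnnRule G \<psi>"] omega_rank_rule_premise[of _ "CoAnnRule G \<psi>"]
    by (simp add: simpler_def)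
qed (use atomic in blast)

section \<open>The canonical model\<close>

text \<open>Its worlds are sets of formulas, which is exactly the world type over which
  \<open>valid\<close> quantifies.\<close>

definition canonical_model :: "('a::linorder, 'p, ('a, 'p) fm set) model" where
  "canonical_model =
     \<lparr>W = {\<Gamma>. mcs \<Gamma>}, R = (\<lambda>a. {(\<Gamma>, \<Delta>). mcs \<Gamma> \<and> mcs \<Delta> \<and> unbox a \<Gamma> \<subseteq> \<Delta>}),
      V = (\<lambda>p. {\<Gamma>. Atom p \<in> \<Gamma>})\<rparr>"

lemma canonical_model_simps:
  "W canonical_model = {\<Gamma>. mcs \<Gamma>}"
  "R canonical_model a = {(\<Gamma>, \<Delta>). mcs \<Gamma> \<and> mcs \<Delta> \<and> unbox a \<Gamma> \<subseteq> \<Delta>}"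
  "V canonical_model p = {\<Gamma>. Atom p \<in> \<Gamma>}"
  by (simp_all add: canonical_model_def)

lemma equiv_canonical_model: "equiv (W canonical_model) (R canonical_model a)"
proof (rule equivI)
  show "refl_on (W canonical_model) (R canonical_model a)"
    using mcs_CoRGAL_mp[OF _ A2] by (auto simp: refl_on_def canonical_model_simps unbox_def)
  show "sym (R canonical_model a)"
  proof (rule symI)
    fix \<Gamma> \<Delta> assume "(\<Gamma>, \<Delta>) \<in> R canonical_model a"
    then have \<Gamma>: "mcs \<Gamma>" and \<Delta>: "mcs \<Delta>" and "unbox a \<Gamma> \<subseteq> \<Delta>"
      by (auto simp: canonical_model_simps)
    have "\<phi> \<in> \<Gamma>" if "K a \<phi> \<in> \<Delta>" for \<phi>
    proof (rule ccontr)
      assume "\<phi> \<notin> \<Gamma>"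
      then have "Neg (K a \<phi>) \<in> \<Gamma>"
        using mcs_CoRGAL_mp[OF \<Gamma> A2] mcs_Neg[OF \<Gamma>] by blast
      then have "Neg (K a \<phi>) \<in> \<Delta>"
        using mcs_CoRGAL_mp[OF \<Gamma> A4] \<open>unbox a \<Gamma> \<subseteq> \<Delta>\<close> by (auto simp: unbox_def)
      then show False
        using that mcs_Neg[OF \<Delta>] by blast
    qed
    then show "(\<Delta>, \<Gamma>) \<in> R canonical_model a"
      using \<Gamma> \<Delta> by (auto simp: canonical_model_simps unbox_def)
  qed
  show "trans (R canonical_model a)"
  proof (rule transI)
    fix \<Gamma> \<Delta> \<Theta> assume "(\<Gamma>, \<Delta>) \<in> R canonical_model a" "(\<Delta>, \<Theta>) \<in> R canonical_model a"
    then show "(\<Gamma>, \<Theta>) \<in> R canonical_model a"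
      using mcs_CoRGAL_mp[OF _ A3] by (simp add: canonical_model_simps unbox_def) blast
  qed
qed (auto simp: canonical_model_simps)

lemma truth_K:
  fixes \<Gamma> :: "('a::{finite,linorder}, 'p::countable) fm set"
  assumes \<Gamma>: "mcs \<Gamma>" and IH: "\<And>\<Delta>. mcs \<Delta> \<Longrightarrow> sat canonical_model \<Delta> \<psi> \<longleftrightarrow> \<psi> \<in> \<Delta>"
  shows "sat canonical_model \<Gamma> (K a \<psi>) \<longleftrightarrow> K a \<psi> \<in> \<Gamma>"
proof -
  have "sat canonical_model \<Gamma> (K a \<psi>)
      \<longleftrightarrow> (\<forall>\<Delta>. mcs \<Delta> \<and> unbox a \<Gamma> \<subseteq> \<Delta> \<longrightarrow> sat canonical_model \<Delta> \<psi>)"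
    using \<Gamma> by (auto simp: canonical_model_simps)
  also have "\<dots> \<longleftrightarrow> (\<forall>\<Delta>. mcs \<Delta> \<and> unbox a \<Gamma> \<subseteq> \<Delta> \<longrightarrow> \<psi> \<in> \<Delta>)"
    using IH by blast
  also have "\<dots> \<longleftrightarrow> K a \<psi> \<in> \<Gamma>"
    using mcs_K[OF \<Gamma>] by simp
  finally show ?thesis .
qed

lemma truth_lemma:
  fixes \<phi> :: "('a::{finite,linorder}, 'p::countable) fm"
  shows "mcs \<Gamma> \<Longrightarrow> sat canonical_model \<Gamma> \<phi> \<longleftrightarrow> \<phi> \<in> \<Gamma>"
proof (induction \<phi> arbitrary: \<Gamma> rule: wf_induct_rule[OF wf_simpler])
  case (1 \<phi>)
  note IH = "1.IH" and \<Gamma> = "1.prems"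
  from reduction_cases[of \<phi>] show ?case
  proof cases
    case (atomic p)
    then show ?thesis
      by (simp add: canonical_model_simps)
  next
    case (negation \<psi>)
    then show ?thesis
      using IH \<Gamma> mcs_Neg[OF \<Gamma>] by simp
  next
    case (conjunction \<psi> \<chi>)
    then show ?thesis
      using IH \<Gamma> mcs_Conj[OF \<Gamma>] by simp
  next
    case (knowledge a \<psi>)
    then show ?thesis
      using IH truth_K[OF \<Gamma>] by blast
  next
    case (announcement \<theta> \<psi>)
    then show ?thesis
      using IH[OF announcement(2) \<Gamma>] sat_reduce_Ann[of canonical_model \<Gamma> \<theta> \<psi>]
        mcs_CoRGAL_Iff[OF \<Gamma> CoRGAL_reduce_Ann] by blast
  next
    case (omega \<eta> r)
    then show ?thesis
      using IH \<Gamma> sat_fill_rule_conclusion[of canonical_model \<Gamma> \<eta> r] mcs_fill_rule_conclusion[OF \<Gamma>]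
      by blast
  qed
qed

theorem mainTheorem15:
  fixes \<phi> :: "('a :: {finite, linorder}, 'p :: countable) fm"
  assumes "valid \<phi>"
  shows "CoRGAL \<phi>"
proof (rule ccontr)
  assume "\<not> CoRGAL \<phi>"
  then obtain \<Gamma> where \<Gamma>: "mcs \<Gamma>" "\<phi> \<notin> \<Gamma>"
    using lindenbaum_avoiding[OF is_theory_CoRGAL] by auto
  then have "\<not> sat canonical_model \<Gamma> \<phi>"
    by (simp add: truth_lemma)
  moreover have "is_model (canonical_model :: ('a, 'p, ('a, 'p) fm set) model)"
    and "\<Gamma> \<in> W canonical_model"
    using \<Gamma>(1) equiv_canonical_model by (auto simp: is_model_def canonical_model_simps)
  then have "sat canonical_model \<Gamma> \<phi>"
    using assms unfolding valid_def by blast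
  ultimately show False
    by contradiction
qed

end
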